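(* Let $\ell\ge 1$ be a fixed integer and let $k=\max(2,\ell)$. Then the polynomial $P(x)=(2k-3)x^{2k+2}+(1-2k)x^{2k}+x^4-2x^2+1$ has a unique root $\tau$ in the open interval $(0,1)$. Moreover, every graph with maximum degree $\Delta\ge 2$ and girth at least $2\ell+1$ has an acyclic edge-coloring with at most $\lceil(2+\gamma)(\Delta-1)\rceil$ colors, where $\gamma=(\tau^{2k}-\tau^2+1)/(\tau-\tau^3)$.
   Context: An edge-coloring of a graph is acyclic if it is proper (adjacent edges receive different colors) and every cycle contains at least three colors. The girth of a graph is the length of a shortest cycle ($+\infty$ if the graph is acyclic). Graphs are finite. *)

theory Defs
  imports Complex_Main
begin

definition graph :: "'a set \<Rightarrow> 'a set set \<Rightarrow> bool" where
  "graph V E \<longleftrightarrow> finite V \<and> (\<forall>e\<in>E. e \<subseteq> V \<and> card e = 2)"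

definition degree :: "'a set set \<Rightarrow> 'a \<Rightarrow> nat" where
  "degree E v = card {e \<in> E. v \<in> e}"

definition max_degree :: "'a set \<Rightarrow> 'a set set \<Rightarrow> nat" where
  "max_degree V E = Max (insert 0 (degree E ` V))"

definition cycle_edges :: "'a list \<Rightarrow> 'a set set" where
  "cycle_edges cs = {{cs ! i, cs ! ((i + 1) mod length cs)} | i. i < length cs}"

definition is_cycle :: "'a set \<Rightarrow> 'a set set \<Rightarrow> 'a list \<Rightarrow> bool" where
  "is_cycle V E cs \<longleftrightarrow> length cs \<ge> 3 \<and> distinct cs \<and> set cs \<subseteq> V \<and> cycle_edges cs \<subseteq> E"

text \<open>Girth at least g: every cycle has length at least g (vacuous for forests,
  whose girth is +\<infinity>).\<close>
definition girth_at_least :: "'a set \<Rightarrow> 'a set set \<Rightarrow> nat \<Rightarrow> bool" where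
  "girth_at_least V E g \<longleftrightarrow> (\<forall>cs. is_cycle V E cs \<longrightarrow> length cs \<ge> g)"

definition proper_edge_coloring :: "'a set set \<Rightarrow> ('a set \<Rightarrow> 'c) \<Rightarrow> bool" where
  "proper_edge_coloring E c \<longleftrightarrow>
     (\<forall>e\<in>E. \<forall>f\<in>E. e \<noteq> f \<and> e \<inter> f \<noteq> {} \<longrightarrow> c e \<noteq> c f)"

definition acyclic_edge_coloring :: "'a set \<Rightarrow> 'a set set \<Rightarrow> ('a set \<Rightarrow> 'c) \<Rightarrow> bool" where
  "acyclic_edge_coloring V E c \<longleftrightarrow> proper_edge_coloring E c \<and>
     (\<forall>cs. is_cycle V E cs \<longrightarrow> card (c ` cycle_edges cs) \<ge> 3)"

definition acyclic_colorable :: "'a set \<Rightarrow> 'a set set \<Rightarrow> nat \<Rightarrow> bool" where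
  "acyclic_colorable V E m \<longleftrightarrow>
     (\<exists>c :: 'a set \<Rightarrow> nat. c ` E \<subseteq> {..<m} \<and> acyclic_edge_coloring V E c)"

definition polyP :: "nat \<Rightarrow> real \<Rightarrow> real" where
  "polyP k x = (2 * real k - 3) * x ^ (2*k+2) + (1 - 2 * real k) * x ^ (2*k) + x^4 - 2 * x^2 + 1"

end

theory Submission
  imports Defs "HOL-Library.FuncSet"
begin

text \<open>
  Write d = \<Delta> - 1, fix any \<tau> \<in> (0,1) and put growth = d / \<tau>.
  For F \<subseteq> E let colorings F be the acyclic colourings of F with N colours; we show
  growth \<cdot> |colorings F| \<le> |colorings (F + e)| by induction on |F|, which for F = E gives
  an acyclic colouring of the whole graph.

  Extend a colouring of F to e = uv by a colour avoiding the colours at u and v and not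
  closing a two-coloured 4-cycle: at least N - 2d colours qualify. If such an extension is
  not acyclic, it has a two-coloured cycle through e, of even length 2i + 2 with i \<ge> k by
  the girth condition. The extension is determined by the non-backtracking walk traced by
  the cycle (at most d^(2i) choices) together with its restriction to F minus the 2i - 1 tail
  edges of the cycle, and by induction there are at most |colorings F| / growth^(2i - 1) such
  restrictions. Summing over i, at most |colorings F| \<cdot> d \<cdot> \<tau>^(2k-1) / (1 - \<tau>^2)
  extensions are bad, so N \<ge> (2 + 1/\<tau> + \<tau>^(2k-1) / (1 - \<tau>^2)) d colours suffice;
  this constant is 2 + \<gamma>.
\<close>

section \<open>Real estimates\<close>

lemma polyP_conv_diff:
  "polyP k x = (1 - x\<^sup>2)\<^sup>2 - ((2 * real k - 1) * x ^ (2*k) - (2 * real k - 3) * x ^ (2*k+2))"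
  unfolding polyP_def by (simp add: power2_eq_square power4_eq_xxxx algebra_simps)

lemma polyP_tail_strict_mono:
  fixes x y :: real
  assumes k: "k \<ge> 2" and xy: "0 < x" "x < y" "y < 1"
  shows "(2 * real k - 1) * x ^ (2*k) - (2 * real k - 3) * x ^ (2*k+2)
       < (2 * real k - 1) * y ^ (2*k) - (2 * real k - 3) * y ^ (2*k+2)"
proof (rule DERIV_pos_imp_increasing[OF xy(2)])
  fix t :: real assume t: "x \<le> t" "t \<le> y"
  let ?c = "(2 * real k - 1) * (2 * real k) - (2 * real k - 3) * (2 * real k + 2) * t\<^sup>2"
  have "((\<lambda>t. (2 * real k - 1) * t ^ (2*k) - (2 * real k - 3) * t ^ (2*k+2)) has_real_derivative
      (2 * real k - 1) * (real (2*k) * t ^ (2*k - 1)) - (2 * real k - 3) * (real (2*k+2) * t ^ (2*k+1))) (at t)"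
    by (rule derivative_eq_intros refl)+ simp
  moreover have "t ^ (2*k+1) = t ^ (2*k - 1) * t\<^sup>2"
    using k by (simp flip: power_add)
  then have "(2 * real k - 1) * (real (2*k) * t ^ (2*k - 1)) - (2 * real k - 3) * (real (2*k+2) * t ^ (2*k+1))
      = t ^ (2*k - 1) * ?c"
    by (simp add: algebra_simps)
  \<comment> \<open>the bracket exceeds its value 6 at t = 1\<close>
  moreover have "0 < ?c"
  proof -
    have "t\<^sup>2 < 1" using t xy by (simp add: power_less_one_iff)
    then have "(2 * real k - 3) * (2 * real k + 2) * t\<^sup>2 \<le> (2 * real k - 3) * (2 * real k + 2)"
      using k by (intro mult_left_le) auto
    then show ?thesis by (simp add: algebra_simps)
  qed
  ultimately show "\<exists>D. ((\<lambda>t. (2 * real k - 1) * t ^ (2*k) - (2 * real k - 3) * t ^ (2*k+2))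
      has_real_derivative D) (at t) \<and> 0 < D"
    using t xy by (intro exI[of _ "t ^ (2*k - 1) * ?c"]) auto
qed

lemma polyP_strict_antimono:
  fixes x y :: real
  assumes "k \<ge> 2" "0 < x" "x < y" "y < 1"
  shows "polyP k y < polyP k x"
proof -
  have "x\<^sup>2 < y\<^sup>2" "y\<^sup>2 < 1"
    using assms by (auto intro: power_strict_mono simp: power_less_one_iff)
  then have "(1 - y\<^sup>2)\<^sup>2 < (1 - x\<^sup>2)\<^sup>2"
    by (intro power_strict_mono) auto
  then show ?thesis
    using polyP_tail_strict_mono[OF assms] unfolding polyP_conv_diff by linarith
qed

lemma polyP_unique_root:
  assumes k: "k \<ge> 2"
  shows "\<exists>!\<tau>::real. 0 < \<tau> \<and> \<tau> < 1 \<and> polyP k \<tau> = 0"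
proof (rule ex_ex1I)
  have "polyP k 0 = 1" "polyP k 1 = -2"
    using k by (simp_all add: polyP_def)
  moreover have "\<forall>x. 0 \<le> x \<and> x \<le> 1 \<longrightarrow> isCont (polyP k) x"
    unfolding polyP_def by (auto intro!: continuous_intros)
  ultimately obtain \<tau> where "0 \<le> \<tau>" "\<tau> \<le> 1" "polyP k \<tau> = 0"
    using IVT2[of "polyP k" 1 0 0] by auto
  with \<open>polyP k 0 = 1\<close> \<open>polyP k 1 = -2\<close> show "\<exists>\<tau>::real. 0 < \<tau> \<and> \<tau> < 1 \<and> polyP k \<tau> = 0"
    by (intro exI[of _ \<tau>]) (auto simp: order.order_iff_strict)
next
  fix x y :: real
  assume "0 < x \<and> x < 1 \<and> polyP k x = 0" "0 < y \<and> y < 1 \<and> polyP k y = 0"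
  then show "x = y"
    using polyP_strict_antimono[OF k, of x y] polyP_strict_antimono[OF k, of y x]
    by (cases x y rule: linorder_cases) auto
qed

lemma gamma_conv:
  fixes \<tau> :: real
  assumes "0 < \<tau>" "\<tau> < 1" "k \<ge> 1"
  shows "(\<tau> ^ (2*k) - \<tau>\<^sup>2 + 1) / (\<tau> - \<tau> ^ 3) = 1 / \<tau> + \<tau> ^ (2*k - 1) / (1 - \<tau>\<^sup>2)"
proof -
  have "\<tau>\<^sup>2 < 1" using assms by (simp add: power_less_one_iff)
  moreover have "\<tau> - \<tau> ^ 3 = \<tau> * (1 - \<tau>\<^sup>2)" "\<tau> ^ (2*k) = \<tau> * \<tau> ^ (2*k - 1)"
    using assms by (simp_all add: algebra_simps power2_eq_square power3_eq_cube flip: power_Suc)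
  ultimately show ?thesis
    using assms by (simp add: field_simps power2_eq_square)
qed

lemma sum_odd_powers_le:
  fixes t :: real
  assumes "0 < t" "t < 1" "k \<ge> 1"
  shows "(\<Sum>i = k..K. t ^ (2*i - 1)) \<le> t ^ (2*k - 1) / (1 - t\<^sup>2)"
proof -
  have "t\<^sup>2 < 1" using assms by (simp add: power_less_one_iff)
  have "(\<Sum>i = k..K. t ^ (2*i - 1)) = (\<Sum>j<Suc K - k. t ^ (2*k - 1) * (t\<^sup>2) ^ j)"
  proof (rule sum.reindex_bij_witness[of _ "\<lambda>j. j + k" "\<lambda>i. i - k"])
    fix i assume "i \<in> {k..K}"
    then have "2 * i - 1 = (2*k - 1) + 2 * (i - k)" using assms(3) by auto
    then show "t ^ (2*k - 1) * (t\<^sup>2) ^ (i - k) = t ^ (2 * i - 1)"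
      by (simp add: power_add power_mult)
  qed auto
  also have "\<dots> = t ^ (2*k - 1) * ((1 - (t\<^sup>2) ^ (Suc K - k)) / (1 - t\<^sup>2))"
    using \<open>t\<^sup>2 < 1\<close> by (simp add: sum_distrib_left[symmetric] sum_gp_strict)
  also have "\<dots> \<le> t ^ (2*k - 1) * (1 / (1 - t\<^sup>2))"
    using assms \<open>t\<^sup>2 < 1\<close> by (intro mult_left_mono divide_right_mono) auto
  finally show ?thesis by simp
qed

section \<open>Cycles as vertex lists\<close>

lemma Suc_mod_Suc_mod_neq: "i < n \<Longrightarrow> 3 \<le> n \<Longrightarrow> Suc (Suc i mod n) mod n \<noteq> (i::nat)"
  by (cases "Suc i < n") (auto simp: mod_if)

lemma image_Suc_mod_lessThan: "(\<lambda>i. Suc i mod n) ` {..<n} = {..<n}"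
proof (intro equalityI subsetI)
  fix j assume "j \<in> {..<n}"
  then show "j \<in> (\<lambda>i. Suc i mod n) ` {..<n}"
    by (cases j) (auto intro: image_eqI[of _ _ "n - 1"] image_eqI[of _ _ "j - 1"])
qed auto

definition cycle_edge :: "'a list \<Rightarrow> nat \<Rightarrow> 'a set" where
  "cycle_edge cs i = {cs ! i, cs ! ((i + 1) mod length cs)}"

lemma cycle_edges_conv_image: "cycle_edges cs = cycle_edge cs ` {..<length cs}"
  unfolding cycle_edges_def cycle_edge_def by auto

lemma inj_on_cycle_edge:
  assumes "distinct cs" "length cs \<ge> 3"
  shows "inj_on (cycle_edge cs) {..<length cs}"
proof
  fix i j assume ij: "i \<in> {..<length cs}" "j \<in> {..<length cs}" "cycle_edge cs i = cycle_edge cs j"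
  let ?n = "length cs"
  have nth_eq: "cs ! a = cs ! b \<longleftrightarrow> a = b" if "a < ?n" "b < ?n" for a b
    using assms that by (simp add: nth_eq_iff_index_eq)
  show "i = j"
  proof (rule ccontr)
    assume "i \<noteq> j"
    with ij have "cs ! i \<noteq> cs ! j" using nth_eq by simp
    with ij(3) have "cs ! i = cs ! ((j + 1) mod ?n)" "cs ! j = cs ! ((i + 1) mod ?n)"
      unfolding cycle_edge_def doubleton_eq_iff by auto
    moreover have "(j + 1) mod ?n < ?n" "(i + 1) mod ?n < ?n"
      using assms(2) by (auto simp flip: length_greater_0_conv)
    ultimately have "i = (j + 1) mod ?n" "j = (i + 1) mod ?n"
      using ij nth_eq by simp_all
    then show False
      using Suc_mod_Suc_mod_neq[of i ?n] ij(1) assms(2) by simp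
  qed
qed

lemma card_cycle_edges:
  "distinct cs \<Longrightarrow> length cs \<ge> 3 \<Longrightarrow> card (cycle_edges cs) = length cs"
  by (simp add: cycle_edges_conv_image card_image inj_on_cycle_edge)

lemma cycle_edges_reindex:
  assumes "length cs' = length cs"
    and "\<And>i. i < length cs \<Longrightarrow> cycle_edge cs' i = cycle_edge cs (g i)"
    and "g ` {..<length cs} = {..<length cs}"
  shows "cycle_edges cs' = cycle_edges cs"
proof -
  have "cycle_edges cs' = cycle_edge cs ` g ` {..<length cs}"
    using assms(1,2) by (simp add: cycle_edges_conv_image image_image)
  then show ?thesis
    using assms(3) by (simp add: cycle_edges_conv_image)
qed

lemma cycle_edges_rotate1: "cycle_edges (rotate1 cs) = cycle_edges cs"
proof (rule cycle_edges_reindex)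
  let ?n = "length cs"
  show "cycle_edge (rotate1 cs) i = cycle_edge cs (Suc i mod ?n)" if "i < ?n" for i
  proof -
    have "Suc i mod ?n < ?n" using that by (cases cs) auto
    with that show ?thesis by (simp add: cycle_edge_def nth_rotate1 mod_Suc_eq)
  qed
  show "(\<lambda>i. Suc i mod ?n) ` {..<?n} = {..<?n}"
    by (rule image_Suc_mod_lessThan)
qed simp

lemma cycle_edges_rotate: "cycle_edges (rotate r cs) = cycle_edges cs"
  by (induction r) (simp_all add: cycle_edges_rotate1)

lemma cycle_edges_rev: "cycle_edges (rev cs) = cycle_edges cs"
proof (rule cycle_edges_reindex)
  let ?n = "length cs"
  let ?g = "\<lambda>i. (2 * ?n - 2 - i) mod ?n"
  show "cycle_edge (rev cs) i = cycle_edge cs (?g i)" if "i < ?n" for i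
  proof (cases "i + 1 < ?n")
    case True
    then have "?g i = ?n - 2 - i" "Suc (?n - 2 - i) = ?n - Suc i"
      by (simp_all add: mod_if)
    with True show ?thesis
      by (simp add: cycle_edge_def rev_nth insert_commute)
  next
    case False
    with that have i: "i = ?n - 1" by simp
    moreover have "2 * ?n - 2 - (?n - 1) = ?n - 1" "?n - 1 < ?n"
      using that by simp_all
    ultimately have "?g i = ?n - 1" by simp
    moreover have "cs \<noteq> []" using that by auto
    ultimately show ?thesis using i
      by (simp add: cycle_edge_def rev_nth insert_commute)
  qed
  have "?g (?g i) = i" if "i < ?n" for i
    using that by (cases "i + 1 < ?n") (auto simp: mod_if)
  moreover have "?g i < ?n" if "i < ?n" for i
    using that by (cases cs) simp_all
  ultimately show "?g ` {..<?n} = {..<?n}"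
    by (metis (no_types, lifting) lessThan_iff image_eqI subsetI subset_antisym image_subsetI)
qed simp

lemma cycle_edges_Cons_rev: "cycle_edges (x # rev ys) = cycle_edges (x # ys)"
proof -
  have "x # rev ys = rotate (length ys) (rev (x # ys))"
    by (metis length_rev rev.simps(2) rotate_append append_Cons append_Nil)
  then show ?thesis by (metis cycle_edges_rotate cycle_edges_rev)
qed

lemma is_cycle_mono: "is_cycle V G cs \<Longrightarrow> G \<subseteq> H \<Longrightarrow> is_cycle V H cs"
  unfolding is_cycle_def by blast

lemma is_cycle_rotate: "is_cycle V G (rotate r cs) \<longleftrightarrow> is_cycle V G cs"
  by (simp add: is_cycle_def cycle_edges_rotate)

lemma is_cycle_through_edge:
  assumes cyc: "is_cycle V G cs" and uv: "{u, v} \<in> cycle_edges cs" "u \<noteq> v"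
  obtains xs where "is_cycle V G (u # v # xs)" "cycle_edges (u # v # xs) = cycle_edges cs"
proof -
  obtain i where i: "i < length cs" "{u, v} = cycle_edge cs i"
    using uv(1) by (auto simp: cycle_edges_conv_image)
  let ?w = "rotate i cs"
  have w: "is_cycle V G ?w" "cycle_edges ?w = cycle_edges cs"
    using cyc by (simp_all add: is_cycle_rotate cycle_edges_rotate)
  then obtain a b zs where abzs: "?w = a # b # zs"
    unfolding is_cycle_def by (metis One_nat_def Suc_le_length_iff numeral_3_eq_3)
  have "{a, b} = {u, v}"
  proof -
    have "length cs \<ge> 3" using cyc by (simp add: is_cycle_def)
    moreover from this have "cs \<noteq> []" by auto
    ultimately have "?w ! 0 = cs ! i" "?w ! 1 = cs ! ((i + 1) mod length cs)"
      using i(1) nth_rotate[of 0 cs i] nth_rotate[of 1 cs i] by simp_all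
    then show ?thesis
      using i(2) abzs by (simp add: cycle_edge_def)
  qed
  then consider "a = u" "b = v" | "a = v" "b = u"
    using uv(2) by (auto simp: doubleton_eq_iff)
  then show thesis
  proof cases
    case 1
    then show thesis using that[of zs] w abzs by simp
  next
    case 2
    \<comment> \<open>traverse the cycle backwards, starting from u\<close>
    have "cycle_edges (u # v # rev zs) = cycle_edges (rotate1 ?w)"
      using cycle_edges_Cons_rev[of u "zs @ [v]"] abzs 2 by simp
    moreover have "set (u # v # rev zs) = set ?w" "distinct (u # v # rev zs) = distinct ?w"
      using abzs 2 by auto
    ultimately show thesis
      using that[of "rev zs"] w abzs
      by (simp add: is_cycle_def cycle_edges_rotate1 del: rotate1.simps)
  qed
qed

lemma cycle_edge_in_cycle_edges: "i < length cs \<Longrightarrow> cycle_edge cs i \<in> cycle_edges cs"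
  by (simp add: cycle_edges_conv_image)

lemma proper_coloring_cycle_edge_Suc_neq:
  assumes "distinct w" "length w \<ge> 3" "proper_edge_coloring G c" "cycle_edges w \<subseteq> G"
    and i: "i < length w"
  shows "c (cycle_edge w (Suc i mod length w)) \<noteq> c (cycle_edge w i)"
proof -
  let ?j = "Suc i mod length w"
  have j: "?j < length w" using i by (cases w) simp_all
  have "?j \<noteq> i"
  proof (cases "Suc i < length w")
    case False
    with i have "Suc i = length w" by simp
    with assms(2) show ?thesis by simp
  qed simp
  then have "cycle_edge w ?j \<noteq> cycle_edge w i"
    using inj_on_cycle_edge[OF assms(1,2)] i j by (auto dest: inj_onD)
  moreover have "w ! ?j \<in> cycle_edge w ?j \<inter> cycle_edge w i"
    by (simp add: cycle_edge_def)
  ultimately show ?thesis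
    using assms(3,4) cycle_edge_in_cycle_edges[OF i] cycle_edge_in_cycle_edges[OF j]
    unfolding proper_edge_coloring_def by blast
qed

context
  fixes w :: "'a list" and G :: "'a set set" and c :: "'a set \<Rightarrow> 'b"
  assumes distinct: "distinct w" and length: "length w \<ge> 3"
    and proper: "proper_edge_coloring G c" and edges: "cycle_edges w \<subseteq> G"
    and two_colors: "card (c ` cycle_edges w) \<le> 2"
begin

lemma two_colored_cycle_alternates:
  "i < length w \<Longrightarrow> c (cycle_edge w i) = c (cycle_edge w (i mod 2))"
proof (induction i)
  case (Suc i)
  let ?c0 = "c (cycle_edge w 0)" and ?c1 = "c (cycle_edge w 1)"
  have neq: "c (cycle_edge w (Suc j)) \<noteq> c (cycle_edge w j)" if "Suc j < length w" for j
    using proper_coloring_cycle_edge_Suc_neq[OF distinct length proper edges, of j] that by simp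
  have "c ` cycle_edges w = {?c0, ?c1}"
  proof (rule card_subset_eq[symmetric])
    show "finite (c ` cycle_edges w)" by (simp add: cycle_edges_conv_image)
    show "{?c0, ?c1} \<subseteq> c ` cycle_edges w"
      using length by (auto intro!: imageI cycle_edge_in_cycle_edges)
    show "card {?c0, ?c1} = card (c ` cycle_edges w)"
      using neq[of 0] length two_colors card_mono[OF \<open>finite (c ` cycle_edges w)\<close> \<open>{?c0, ?c1} \<subseteq> _\<close>]
      by simp
  qed
  then have "c (cycle_edge w (Suc i)) \<in> {?c0, ?c1}"
    using Suc.prems cycle_edge_in_cycle_edges by blast
  with Suc neq[of i] show ?case
    by (auto simp: mod_Suc)
qed simp

lemma two_colored_cycle_even: "even (length w)"
proof (rule ccontr)
  let ?n = "length w"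
  assume "odd ?n"
  then have "c (cycle_edge w (?n - 1)) = c (cycle_edge w 0)"
    using two_colored_cycle_alternates[of "?n - 1"] length by simp
  moreover have "Suc (?n - 1) = ?n"
    using length by simp
  ultimately show False
    using proper_coloring_cycle_edge_Suc_neq[OF distinct length proper edges, of "?n - 1"] length
    by simp
qed

end

section \<open>Non-backtracking walks\<close>

fun non_backtracking_walk :: "'a set set \<Rightarrow> 'a \<Rightarrow> 'a \<Rightarrow> 'a list \<Rightarrow> bool" where
  "non_backtracking_walk E p w [] = True"
| "non_backtracking_walk E p w (y # ys) \<longleftrightarrow>
     {w, y} \<in> E \<and> y \<noteq> p \<and> non_backtracking_walk E w y ys"

lemma non_backtracking_walks_Suc:
  "{ys. length ys = Suc m \<and> non_backtracking_walk E p w ys} =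
   (\<Union>y\<in>{y. {w, y} \<in> E \<and> y \<noteq> p}. (#) y ` {ys. length ys = m \<and> non_backtracking_walk E w y ys})"
  by (auto simp: length_Suc_conv)

lemma card_forward_neighbours_le:
  assumes "graph V E" "\<forall>x\<in>V. degree E x \<le> Suc d" "{p, w} \<in> E"
  shows "card {y. {w, y} \<in> E \<and> y \<noteq> p} \<le> d"
proof -
  let ?Y = "{y. {w, y} \<in> E \<and> y \<noteq> p}"
  have E: "finite E" "\<And>f. f \<in> E \<Longrightarrow> f \<subseteq> V \<and> card f = 2"
    using assms(1) unfolding graph_def by (auto intro: finite_subset[of E "Pow V"])
  then have "w \<in> V" using assms(3) by blast
  have "inj_on (\<lambda>y. {w, y}) ?Y"
    by (rule inj_onI) (auto simp: doubleton_eq_iff)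
  moreover have "(\<lambda>y. {w, y}) ` ?Y \<subseteq> {f \<in> E. w \<in> f} - {{p, w}}"
  proof (rule image_subsetI)
    fix y assume y: "y \<in> ?Y"
    then have "y \<noteq> w" using E(2)[of "{w, y}"] by auto
    with y show "{w, y} \<in> {f \<in> E. w \<in> f} - {{p, w}}"
      by (auto simp: doubleton_eq_iff)
  qed
  ultimately have "card ?Y \<le> card ({f \<in> E. w \<in> f} - {{p, w}})"
    using E(1) by (intro card_inj_on_le) auto
  also have "\<dots> = degree E w - 1"
    using assms(3) E(1) by (simp add: degree_def card_Diff_singleton)
  also have "\<dots> \<le> d"
    using bspec[OF assms(2) \<open>w \<in> V\<close>] by simp
  finally show ?thesis .
qed

lemma card_non_backtracking_walks:
  assumes "graph V E" "\<forall>x\<in>V. degree E x \<le> Suc d" "{p, w} \<in> E"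
  shows "finite {ys. length ys = m \<and> non_backtracking_walk E p w ys}"
    and "card {ys. length ys = m \<and> non_backtracking_walk E p w ys} \<le> d ^ m"
proof -
  have "finite {ys. length ys = m \<and> non_backtracking_walk E p w ys} \<and>
        card {ys. length ys = m \<and> non_backtracking_walk E p w ys} \<le> d ^ m"
    using assms(3)
  proof (induction m arbitrary: p w)
    case 0
    have "{ys. length ys = 0 \<and> non_backtracking_walk E p w ys} = {[]}" by auto
    then show ?case by simp
  next
    case (Suc m)
    let ?Y = "{y. {w, y} \<in> E \<and> y \<noteq> p}"
    let ?W = "\<lambda>y. {ys. length ys = m \<and> non_backtracking_walk E w y ys}"
    have "?Y \<subseteq> V" "finite V"
      using assms(1) by (auto simp: graph_def)
    then have Y: "finite ?Y" "card ?Y \<le> d"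
      using card_forward_neighbours_le[OF assms(1,2) Suc.prems] finite_subset by auto
    have IH: "finite (?W y)" "card (?W y) \<le> d ^ m" if "y \<in> ?Y" for y
      using Suc.IH that by auto
    have "card (\<Union>y\<in>?Y. (#) y ` ?W y) \<le> (\<Sum>y\<in>?Y. card ((#) y ` ?W y))"
      by (rule card_UN_le[OF Y(1)])
    also have "\<dots> \<le> (\<Sum>y\<in>?Y. d ^ m)"
      using IH by (intro sum_mono) (simp add: card_image)
    also have "\<dots> \<le> d * d ^ m"
      using Y(2) by simp
    finally show ?case
      using Y(1) IH by (simp add: non_backtracking_walks_Suc)
  qed
  then show "finite {ys. length ys = m \<and> non_backtracking_walk E p w ys}"
    and "card {ys. length ys = m \<and> non_backtracking_walk E p w ys} \<le> d ^ m"
    by simp_all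
qed

lemma non_backtracking_walk_if_path:
  "distinct (p # w # ys) \<Longrightarrow> successively (\<lambda>x y. {x, y} \<in> E) (w # ys) \<Longrightarrow>
   non_backtracking_walk E p w ys"
  by (induction ys arbitrary: p w) auto

lemma successively_cycle_edges: "successively (\<lambda>x y. {x, y} \<in> cycle_edges cs) cs"
proof -
  have "successively (\<lambda>x y. {x, y} \<in> cycle_edges (zs @ ys)) ys" for zs ys :: "'a list"
  proof (induction ys arbitrary: zs)
    case (Cons x ys)
    show ?case
    proof (cases ys)
      case (Cons y ys')
      have "{x, y} = cycle_edge (zs @ x # y # ys') (length zs)"
        by (simp add: cycle_edge_def nth_append)
      then have "{x, y} \<in> cycle_edges (zs @ x # y # ys')"
        using cycle_edge_in_cycle_edges[of "length zs" "zs @ x # y # ys'"] by simp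
      with Cons.IH[of "zs @ [x]"] Cons show ?thesis by simp
    qed simp
  qed simp
  from this[of "[]"] show ?thesis by simp
qed

lemma non_backtracking_walk_if_cycle:
  assumes "is_cycle V E (u # v # xs)"
  shows "non_backtracking_walk E u v xs"
proof (rule non_backtracking_walk_if_path)
  show "distinct (u # v # xs)"
    using assms by (simp add: is_cycle_def)
  have "successively (\<lambda>x y. {x, y} \<in> E) (u # v # xs)"
    using successively_cycle_edges[of "u # v # xs"]
    by (rule successively_mono) (use assms in \<open>auto simp: is_cycle_def\<close>)
  then show "successively (\<lambda>x y. {x, y} \<in> E) (v # xs)"
    by simp
qed

section \<open>Counting acyclic colourings\<close>

locale coloring_count =
  fixes V :: "'a set" and E :: "'a set set" and N d k l :: nat and \<tau> :: real
  assumes graph: "graph V E"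
    and degree_le: "\<forall>x\<in>V. degree E x \<le> Suc d" and d_pos: "d \<ge> 1"
    and girth: "girth_at_least V E (2*l + 1)" and k_def: "k = max 2 l"
    and tau: "0 < \<tau>" "\<tau> < 1"
    and many_colors: "real N \<ge> (2 + 1 / \<tau> + \<tau> ^ (2*k - 1) / (1 - \<tau>\<^sup>2)) * real d"
begin

text \<open>Colourings are extensional functions on F, so a colouring is determined by its values on F.\<close>
definition colorings :: "'a set set \<Rightarrow> ('a set \<Rightarrow> nat) set" where
  "colorings F = {c \<in> F \<rightarrow>\<^sub>E {..<N}. acyclic_edge_coloring V F c}"

definition growth :: real where
  "growth = real d / \<tau>"

lemma growth_ge_1: "growth \<ge> 1"
proof -
  have "real d * \<tau> \<le> real d"
    using tau by (simp add: mult_left_le)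
  then have "real d \<le> growth"
    using tau by (simp add: growth_def le_divide_eq)
  then show ?thesis
    using d_pos by simp
qed

lemma finite_V: "finite V"
  using graph by (simp add: graph_def)

lemma edge_subset_V: "f \<in> E \<Longrightarrow> f \<subseteq> V"
  using graph by (simp add: graph_def)

lemma card_edge: "f \<in> E \<Longrightarrow> card f = 2"
  using graph by (simp add: graph_def)

lemma finite_E: "finite E"
  using finite_V edge_subset_V by (blast intro: finite_subset[of E "Pow V"])

lemma finite_colorings: "F \<subseteq> E \<Longrightarrow> finite (colorings F)"
proof -
  assume "F \<subseteq> E"
  then have "finite (F \<rightarrow>\<^sub>E {..<N})"
    using finite_E by (intro finite_PiE) (auto intro: finite_subset)
  then show ?thesis
    unfolding colorings_def by simp
qed

lemma restrict_in_colorings: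
  assumes GF: "G \<subseteq> F" and c: "c \<in> colorings F"
  shows "restrict c G \<in> colorings G"
proof -
  have c: "c \<in> F \<rightarrow>\<^sub>E {..<N}" "proper_edge_coloring F c"
    "\<And>cs. is_cycle V F cs \<Longrightarrow> card (c ` cycle_edges cs) \<ge> 3"
    using c by (simp_all add: colorings_def acyclic_edge_coloring_def)
  have "restrict c G \<in> G \<rightarrow>\<^sub>E {..<N}"
    using c(1) GF by auto
  moreover have "proper_edge_coloring G (restrict c G)"
    using c(2) GF unfolding proper_edge_coloring_def by auto
  moreover have "card (restrict c G ` cycle_edges cs) \<ge> 3" if cyc: "is_cycle V G cs" for cs
  proof -
    have "restrict c G ` cycle_edges cs = c ` cycle_edges cs"
      using cyc by (intro image_cong) (auto simp: is_cycle_def)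
    then show ?thesis
      using c(3) is_cycle_mono[OF cyc GF] by simp
  qed
  ultimately show ?thesis
    by (simp add: colorings_def acyclic_edge_coloring_def)
qed

lemma colorings_empty: "colorings {} = {\<lambda>_. undefined}"
proof -
  have "\<not> is_cycle V {} cs" for cs
    using cycle_edge_in_cycle_edges[of 0 cs] by (cases cs) (auto simp: is_cycle_def)
  then show ?thesis
    by (auto simp: colorings_def acyclic_edge_coloring_def proper_edge_coloring_def)
qed

lemma card_colorings_diff:
  assumes growth_step: "\<And>G e. G \<subseteq> E \<Longrightarrow> card G < card F \<Longrightarrow> e \<in> E - G \<Longrightarrow>
      growth * card (colorings G) \<le> card (colorings (insert e G))"
    and "F \<subseteq> E" "S \<subseteq> F"
  shows "growth ^ card S * card (colorings (F - S)) \<le> card (colorings F)"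
proof -
  have "finite F" using assms(2) finite_E finite_subset by blast
  then have "finite S" using assms(3) finite_subset by blast
  then show ?thesis using assms(3)
  proof (induction S rule: finite_induct)
    case (insert s S)
    have "card (F - insert s S) < card F"
      using insert.prems \<open>finite F\<close> by (intro psubset_card_mono) auto
    moreover have "insert s (F - insert s S) = F - S"
      using insert by blast
    ultimately have "growth * card (colorings (F - insert s S)) \<le> card (colorings (F - S))"
      using growth_step[of "F - insert s S" s] insert.prems assms(2) by auto
    then have "growth ^ card (insert s S) * card (colorings (F - insert s S))
        \<le> growth ^ card S * card (colorings (F - S))"
      using insert.hyps growth_ge_1 by (simp add: mult.assoc mult_left_mono)
    with insert show ?case by simp
  qed simp
qed

end

section \<open>Extending a colouring by one edge\<close>

lemma proper_edge_coloring_eqD: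
  assumes "proper_edge_coloring F c" "{z, x} \<in> F" "{z, y} \<in> F" "c {z, x} = c {z, y}"
  shows "x = y"
proof -
  have "{z, x} \<noteq> {z, y} \<and> {z, x} \<inter> {z, y} \<noteq> {} \<longrightarrow> c {z, x} \<noteq> c {z, y}"
    using assms(1-3) unfolding proper_edge_coloring_def by simp
  with assms(4) have "{z, x} = {z, y}" by auto
  then show ?thesis by (auto simp: doubleton_eq_iff)
qed

locale edge_extension = coloring_count +
  fixes F :: "'a set set" and u v :: 'a
  assumes F_subset: "F \<subseteq> E" and uv_edge: "{u, v} \<in> E" "{u, v} \<notin> F" and u_neq_v: "u \<noteq> v"
    and colorings_diff_le: "\<And>S. S \<subseteq> F \<Longrightarrow> growth ^ card S * card (colorings (F - S)) \<le> card (colorings F)"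
begin

abbreviation "e \<equiv> {u, v}"

definition colors_at :: "('a set \<Rightarrow> nat) \<Rightarrow> 'a \<Rightarrow> nat set" where
  "colors_at c x = c ` {f \<in> F. x \<in> f}"

text \<open>Giving e a colour a closes the 4-cycle u v x y with only two colours iff
  a = c {x, y} for one of these pairs.\<close>
definition square_pairs :: "('a set \<Rightarrow> nat) \<Rightarrow> ('a \<times> 'a) set" where
  "square_pairs c = {(x, y). {v, x} \<in> F \<and> {x, y} \<in> F \<and> {y, u} \<in> F \<and> c {v, x} = c {y, u}}"

definition available :: "('a set \<Rightarrow> nat) \<Rightarrow> nat set" where
  "available c = {..<N} - (colors_at c u \<union> colors_at c v \<union> (\<lambda>(x, y). c {x, y}) ` square_pairs c)"

lemma finite_F: "finite F"
  using F_subset finite_E finite_subset by blast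

lemma card_colors_at_le:
  assumes "x \<in> e"
  shows "card (colors_at c x) \<le> d"
proof -
  have "x \<in> V" using assms edge_subset_V[OF uv_edge(1)] by blast
  have "{f \<in> F. x \<in> f} \<subseteq> {f \<in> E. x \<in> f} - {e}"
    using F_subset uv_edge(2) by blast
  then have "card {f \<in> F. x \<in> f} \<le> card ({f \<in> E. x \<in> f} - {e})"
    using finite_E by (intro card_mono) auto
  also have "\<dots> = degree E x - 1"
    using uv_edge(1) assms finite_E by (simp add: degree_def card_Diff_singleton)
  also have "\<dots> \<le> d"
    using bspec[OF degree_le \<open>x \<in> V\<close>] by simp
  finally have "card {f \<in> F. x \<in> f} \<le> d" .
  moreover have "finite {f \<in> F. x \<in> f}"
    using finite_F by simp
  ultimately show ?thesis
    unfolding colors_at_def using card_image_le[of "{f \<in> F. x \<in> f}" c] by linarith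
qed

lemma finite_square_pairs: "finite (square_pairs c)"
proof -
  have "square_pairs c \<subseteq> V \<times> V"
    unfolding square_pairs_def using F_subset edge_subset_V by blast
  then show ?thesis
    using finite_V finite_subset by blast
qed

lemma inj_on_square_pairs:
  assumes "proper_edge_coloring F c"
  shows "inj_on (\<lambda>(x, y). c {v, x}) (square_pairs c)"
proof (rule inj_onI, clarify)
  fix x y x' y'
  assume "(x, y) \<in> square_pairs c" "(x', y') \<in> square_pairs c" "c {v, x} = c {v, x'}"
  then show "x = x' \<and> y = y'"
    using proper_edge_coloring_eqD[OF assms, of v x x'] proper_edge_coloring_eqD[OF assms, of u y y']
    unfolding square_pairs_def by (simp add: insert_commute)
qed

lemma card_square_colors_le:
  assumes "proper_edge_coloring F c"
  shows "card ((\<lambda>(x, y). c {x, y}) ` square_pairs c) \<le> card (colors_at c u \<inter> colors_at c v)"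
proof -
  have "(\<lambda>(x, y). c {v, x}) ` square_pairs c \<subseteq> colors_at c u \<inter> colors_at c v"
  proof (rule image_subsetI, clarify)
    fix x y assume "(x, y) \<in> square_pairs c"
    then have "{v, x} \<in> F" "{y, u} \<in> F" "c {v, x} = c {y, u}"
      by (simp_all add: square_pairs_def)
    moreover have "c {y, u} \<in> colors_at c u" "c {v, x} \<in> colors_at c v"
      unfolding colors_at_def using \<open>{v, x} \<in> F\<close> \<open>{y, u} \<in> F\<close> by (auto intro!: imageI)
    ultimately show "c {v, x} \<in> colors_at c u \<inter> colors_at c v"
      by simp
  qed
  moreover have "finite (colors_at c u \<inter> colors_at c v)"
    unfolding colors_at_def using finite_F by simp
  ultimately have "card (square_pairs c) \<le> card (colors_at c u \<inter> colors_at c v)"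
    using card_inj_on_le[OF inj_on_square_pairs[OF assms]] by blast
  then show ?thesis
    using card_image_le[OF finite_square_pairs] order.trans by blast
qed

text \<open>A colour seen at both ends of e accounts for at most one further forbidden colour.\<close>
lemma card_available_ge:
  assumes "proper_edge_coloring F c"
  shows "real (card (available c)) \<ge> real N - 2 * real d"
proof -
  let ?A = "colors_at c u" and ?B = "colors_at c v"
  let ?S = "(\<lambda>(x, y). c {x, y}) ` square_pairs c"
  have fin: "finite ?A" "finite ?B" "finite ?S"
    using finite_F finite_square_pairs by (simp_all add: colors_at_def)
  have "card (?A \<union> ?B \<union> ?S) \<le> card (?A \<union> ?B) + card (?A \<inter> ?B)"
    using card_Un_le[of "?A \<union> ?B" ?S] card_square_colors_le[OF assms] by linarith
  also have "\<dots> = card ?A + card ?B"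
    using card_Un_Int[OF fin(1,2)] by simp
  also have "\<dots> \<le> 2 * d"
    using card_colors_at_le[of u c] card_colors_at_le[of v c] by simp
  finally have "card (?A \<union> ?B \<union> ?S) \<le> 2 * d" .
  moreover have "card {..<N} - card (?A \<union> ?B \<union> ?S) \<le> card (available c)"
    unfolding available_def using fin by (intro diff_card_le_card_Diff) auto
  ultimately show ?thesis by simp
qed

definition extensions :: "(('a set \<Rightarrow> nat) \<times> nat) set" where
  "extensions = Sigma (colorings F) available"

definition extend :: "('a set \<Rightarrow> nat) \<times> nat \<Rightarrow> 'a set \<Rightarrow> nat" where
  "extend p = (fst p)(e := snd p)"

definition bad_extensions :: "(('a set \<Rightarrow> nat) \<times> nat) set" where
  "bad_extensions = {p \<in> extensions. extend p \<notin> colorings (insert e F)}"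

lemma colorings_proper: "c \<in> colorings F \<Longrightarrow> proper_edge_coloring F c"
  by (simp add: colorings_def acyclic_edge_coloring_def)

lemma finite_extensions: "finite extensions"
  unfolding extensions_def available_def using finite_colorings[OF F_subset] by simp

lemma card_extensions_ge: "real (card extensions) \<ge> real (card (colorings F)) * (real N - 2 * real d)"
proof -
  have "real (card extensions) = (\<Sum>c\<in>colorings F. real (card (available c)))"
    unfolding extensions_def available_def using finite_colorings[OF F_subset] by simp
  also have "\<dots> \<ge> (\<Sum>c\<in>colorings F. real N - 2 * real d)"
    using card_available_ge colorings_proper by (intro sum_mono) blast
  finally show ?thesis by simp
qed

lemma extension_proper:
  assumes "c \<in> colorings F" "a \<in> available c"
  shows "proper_edge_coloring (insert e F) (c(e := a))"
  unfolding proper_edge_coloring_def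
proof (intro ballI impI)
  fix f g assume fg: "f \<in> insert e F" "g \<in> insert e F" "f \<noteq> g \<and> f \<inter> g \<noteq> {}"
  have a_new: "c h \<noteq> a" if "h \<in> F" "h \<inter> e \<noteq> {}" for h
    using that assms(2) unfolding available_def colors_at_def by blast
  show "(c(e := a)) f \<noteq> (c(e := a)) g"
  proof (cases "f = e \<or> g = e")
    case True
    with fg a_new[of f] a_new[of g] show ?thesis
      by (auto simp: Int_commute)
  next
    case False
    with fg colorings_proper[OF assms(1)] show ?thesis
      unfolding proper_edge_coloring_def by simp
  qed
qed

lemma extension_in_PiE:
  "c \<in> colorings F \<Longrightarrow> a \<in> available c \<Longrightarrow> c(e := a) \<in> insert e F \<rightarrow>\<^sub>E {..<N}"
  unfolding colorings_def available_def by (auto simp: PiE_iff extensional_def)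

lemma inj_on_extend: "inj_on extend extensions"
proof (rule inj_onI, clarify)
  fix c a c' a' assume ext: "(c, a) \<in> extensions" "(c', a') \<in> extensions"
    and "extend (c, a) = extend (c', a')"
  then have eq: "c(e := a) = c'(e := a')" by (simp add: extend_def)
  from ext have "c \<in> colorings F" "c' \<in> colorings F"
    by (simp_all add: extensions_def)
  then have "c \<in> F \<rightarrow>\<^sub>E {..<N}" "c' \<in> F \<rightarrow>\<^sub>E {..<N}"
    by (simp_all add: colorings_def)
  then have "c e = c' e"
    using PiE_arb uv_edge(2) by metis
  have "c f = c' f" for f
    using fun_cong[OF eq, of f] \<open>c e = c' e\<close> by (cases "f = e") auto
  then show "c = c' \<and> a = a'"
    using fun_cong[OF eq, of e] by auto
qed

lemma card_colorings_insert_ge: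
  "real (card (colorings (insert e F))) \<ge> real (card extensions) - real (card bad_extensions)"
proof -
  have bad: "bad_extensions \<subseteq> extensions"
    unfolding bad_extensions_def by (rule Collect_restrict)
  then have "finite bad_extensions"
    using finite_extensions finite_subset by blast
  have "extend ` (extensions - bad_extensions) \<subseteq> colorings (insert e F)"
    unfolding bad_extensions_def by blast
  moreover have "inj_on extend (extensions - bad_extensions)"
    using inj_on_extend by (rule inj_on_subset) blast
  moreover have "finite (colorings (insert e F))"
    using F_subset uv_edge(1) by (intro finite_colorings) blast
  ultimately have "card (extensions - bad_extensions) \<le> card (colorings (insert e F))"
    using card_inj_on_le by blast
  moreover have "card (extensions - bad_extensions) = card extensions - card bad_extensions"
    using card_Diff_subset[OF \<open>finite bad_extensions\<close> bad] .
  moreover have "card bad_extensions \<le> card extensions"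
    using card_mono[OF finite_extensions bad] .
  ultimately show ?thesis
    by linarith
qed

definition bichromatic_cycle :: "('a set \<Rightarrow> nat) \<Rightarrow> nat \<Rightarrow> 'a list \<Rightarrow> bool" where
  "bichromatic_cycle c a xs \<longleftrightarrow>
     is_cycle V (insert e F) (u # v # xs) \<and> card (c(e := a) ` cycle_edges (u # v # xs)) \<le> 2"

lemma extensionsD: "(c, a) \<in> extensions \<Longrightarrow> c \<in> colorings F \<and> a \<in> available c"
  by (simp add: extensions_def)

lemma bad_extension_bichromatic_cycle:
  assumes "(c, a) \<in> bad_extensions"
  shows "\<exists>xs. bichromatic_cycle c a xs"
proof -
  have "(c, a) \<in> extensions"
    using assms by (simp add: bad_extensions_def)
  then have c: "c \<in> colorings F" "a \<in> available c"
    by (simp_all add: extensionsD)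
  have "c(e := a) \<notin> colorings (insert e F)"
    using assms by (simp add: bad_extensions_def extend_def)
  then have "\<not> (\<forall>cs. is_cycle V (insert e F) cs \<longrightarrow> card (c(e := a) ` cycle_edges cs) \<ge> 3)"
    using extension_proper[OF c] extension_in_PiE[OF c]
    by (simp add: colorings_def acyclic_edge_coloring_def)
  then obtain cs where cs: "is_cycle V (insert e F) cs" "card (c(e := a) ` cycle_edges cs) < 3"
    by (auto simp: not_le)
  have "e \<in> cycle_edges cs"
  proof (rule ccontr)
    assume "e \<notin> cycle_edges cs"
    then have "is_cycle V F cs"
      using cs(1) by (auto simp: is_cycle_def)
    moreover have "c(e := a) ` cycle_edges cs = c ` cycle_edges cs"
      using \<open>e \<notin> cycle_edges cs\<close> by (intro image_cong) auto
    with cs(2) have "card (c ` cycle_edges cs) < 3" by simp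
    ultimately show False
      using c(1) unfolding colorings_def acyclic_edge_coloring_def by fastforce
  qed
  then obtain xs where xs: "is_cycle V (insert e F) (u # v # xs)"
    and "cycle_edges (u # v # xs) = cycle_edges cs"
    using is_cycle_through_edge[OF cs(1) _ u_neq_v] by blast
  with cs(2) have "card (c(e := a) ` cycle_edges (u # v # xs)) \<le> 2"
    by (simp only:)
  with xs show ?thesis
    unfolding bichromatic_cycle_def by blast
qed

context
  fixes c a xs
  assumes extension: "(c, a) \<in> extensions" and bichromatic: "bichromatic_cycle c a xs"
begin

lemma bichromatic_cycle_basics:
  shows "distinct (u # v # xs)" "length (u # v # xs) \<ge> 3" "cycle_edge (u # v # xs) 0 = e"
    and "cycle_edges (u # v # xs) \<subseteq> insert e F"
    and "proper_edge_coloring (insert e F) (c(e := a))"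
    and "card (c(e := a) ` cycle_edges (u # v # xs)) \<le> 2"
proof -
  have "is_cycle V (insert e F) (u # v # xs)"
    using bichromatic by (simp add: bichromatic_cycle_def)
  then show "distinct (u # v # xs)" "length (u # v # xs) \<ge> 3"
    and "cycle_edges (u # v # xs) \<subseteq> insert e F"
    by (simp_all add: is_cycle_def)
  show "cycle_edge (u # v # xs) 0 = e"
    by (simp add: cycle_edge_def)
  show "proper_edge_coloring (insert e F) (c(e := a))"
    using extension_proper extensionsD[OF extension] by blast
  show "card (c(e := a) ` cycle_edges (u # v # xs)) \<le> 2"
    using bichromatic by (simp add: bichromatic_cycle_def)
qed

lemma bichromatic_cycle_edge_neq:
  "0 < j \<Longrightarrow> j < length (u # v # xs) \<Longrightarrow> cycle_edge (u # v # xs) j \<noteq> e"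
  using inj_onD[OF inj_on_cycle_edge[OF bichromatic_cycle_basics(1,2)], of j 0]
    bichromatic_cycle_basics(3)
  by auto

lemma bichromatic_cycle_edge_in_F:
  "0 < j \<Longrightarrow> j < length (u # v # xs) \<Longrightarrow> cycle_edge (u # v # xs) j \<in> F"
  using bichromatic_cycle_edge_neq bichromatic_cycle_basics(4) cycle_edge_in_cycle_edges[of j "u # v # xs"]
  by blast

lemma bichromatic_cycle_color:
  assumes "0 < j" "j < length (u # v # xs)"
  shows "c (cycle_edge (u # v # xs) j) = (if even j then a else c (cycle_edge (u # v # xs) 1))"
proof -
  let ?w = "u # v # xs" and ?c = "c(e := a)"
  have "?c (cycle_edge ?w j) = ?c (cycle_edge ?w (j mod 2))"
    by (rule two_colored_cycle_alternates[OF bichromatic_cycle_basics(1,2,5,4,6) assms(2)])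
  moreover have "?c (cycle_edge ?w j) = c (cycle_edge ?w j)"
    using bichromatic_cycle_edge_neq[OF assms] by simp
  moreover have "?c (cycle_edge ?w 1) = c (cycle_edge ?w 1)"
    using bichromatic_cycle_edge_neq[of 1] by simp
  moreover have "j mod 2 = (if even j then 0 else 1)"
    by presburger
  ultimately show ?thesis
    using bichromatic_cycle_basics(3) by (simp split: if_splits)
qed

lemma bichromatic_cycle_not_square: "length xs \<noteq> 2"
proof
  assume "length xs = 2"
  then obtain x y where xs: "xs = [x, y]"
    by (auto simp: numeral_2_eq_2 length_Suc_conv)
  have edges: "cycle_edge [u, v, x, y] 1 = {v, x}" "cycle_edge [u, v, x, y] 2 = {x, y}"
    "cycle_edge [u, v, x, y] 3 = {y, u}"
    by (simp_all add: cycle_edge_def)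
  have "{v, x} \<in> F" "{x, y} \<in> F" "{y, u} \<in> F"
    using bichromatic_cycle_edge_in_F[of 1] bichromatic_cycle_edge_in_F[of 2]
      bichromatic_cycle_edge_in_F[of 3]
    unfolding xs edges by simp_all
  moreover have "c {x, y} = a" "c {y, u} = c {v, x}"
    using bichromatic_cycle_color[of 2] bichromatic_cycle_color[of 3]
    unfolding xs edges by simp_all
  ultimately have "(x, y) \<in> square_pairs c"
    by (simp add: square_pairs_def)
  then have "a \<notin> available c"
    using \<open>c {x, y} = a\<close> unfolding available_def by force
  with extensionsD[OF extension] show False by simp
qed

lemma bichromatic_cycle_length:
  shows "even (length xs)" "2 * k \<le> length xs" "length xs \<le> card V"
proof -
  show "even (length xs)"
    using two_colored_cycle_even[OF bichromatic_cycle_basics(1,2,5,4,6)] by simp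
  have "is_cycle V E (u # v # xs)"
    using bichromatic F_subset uv_edge(1) unfolding bichromatic_cycle_def
    by (blast intro: is_cycle_mono)
  then have "2 * l + 1 \<le> length (u # v # xs)" "set (u # v # xs) \<subseteq> V"
    using girth unfolding girth_at_least_def is_cycle_def by blast+
  then show "2 * k \<le> length xs"
    using \<open>even (length xs)\<close> bichromatic_cycle_not_square bichromatic_cycle_basics(2)
    unfolding k_def by auto
  show "length xs \<le> card V"
    using card_mono[OF finite_V \<open>set (u # v # xs) \<subseteq> V\<close>]
      distinct_card[OF bichromatic_cycle_basics(1)] by simp
qed

end

definition tail_edges :: "'a list \<Rightarrow> 'a set set" where
  "tail_edges xs = cycle_edges (u # v # xs) - cycle_edge (u # v # xs) ` {0, 1, 2}"

definition cycle_codes :: "'a list set" where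
  "cycle_codes = {xs. even (length xs) \<and> 2 * k \<le> length xs \<and> length xs \<le> card V \<and>
     non_backtracking_walk E u v xs \<and> tail_edges xs \<subseteq> F \<and> length xs \<le> card (tail_edges xs) + 1}"

lemma bichromatic_cycle_code:
  assumes "(c, a) \<in> extensions" "bichromatic_cycle c a xs"
  shows "xs \<in> cycle_codes"
proof -
  let ?w = "u # v # xs"
  have "tail_edges xs \<subseteq> F"
  proof
    fix f assume "f \<in> tail_edges xs"
    then obtain j where "j < length ?w" "f = cycle_edge ?w j" "j \<noteq> 0"
      unfolding tail_edges_def cycle_edges_conv_image by auto
    then show "f \<in> F"
      using bichromatic_cycle_edge_in_F[OF assms] by blast
  qed
  moreover have "length xs \<le> card (tail_edges xs) + 1"
  proof -
    have "card (cycle_edges ?w) - card (cycle_edge ?w ` {0, 1, 2}) \<le> card (tail_edges xs)"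
      unfolding tail_edges_def by (rule diff_card_le_card_Diff) simp
    moreover have "card (cycle_edge ?w ` {0, 1, 2}) \<le> 3"
      using card_image_le[of "{0, 1, 2 :: nat}" "cycle_edge ?w"] by simp
    ultimately show ?thesis
      using card_cycle_edges[OF bichromatic_cycle_basics(1,2)[OF assms]] by simp
  qed
  moreover have "non_backtracking_walk E u v xs"
    using assms(2) F_subset uv_edge(1) unfolding bichromatic_cycle_def
    by (blast intro: is_cycle_mono non_backtracking_walk_if_cycle)
  ultimately show ?thesis
    using bichromatic_cycle_length[OF assms] by (simp add: cycle_codes_def)
qed

text \<open>On a bichromatic cycle through e, the colours of the tail edges are those of the
  first two edges after e, alternately; so an extension is recovered from the cycle
  together with its restriction to the edges off the tail.\<close>
lemma bichromatic_cycle_determines_extension: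
  assumes ext: "(c, a) \<in> extensions" "(c', a') \<in> extensions"
    and bi: "bichromatic_cycle c a xs" "bichromatic_cycle c' a' xs"
    and agree: "\<And>f. f \<in> F - tail_edges xs \<Longrightarrow> c f = c' f"
  shows "c = c'" "a = a'"
proof -
  let ?w = "u # v # xs"
  have "length ?w > 2"
    using bichromatic_cycle_length(2)[OF ext(1) bi(1)] k_def by (cases xs) auto
  then have kept: "cycle_edge ?w j \<in> F - tail_edges xs" if "j \<in> {1, 2}" for j
    using that bichromatic_cycle_edge_in_F[OF ext(1) bi(1), of j] by (auto simp: tail_edges_def)
  have colors: "c (cycle_edge ?w j) = (if even j then a else c (cycle_edge ?w 1))"
    "c' (cycle_edge ?w j) = (if even j then a' else c' (cycle_edge ?w 1))"
    if "0 < j" "j < length ?w" for j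
    using bichromatic_cycle_color[OF ext(1) bi(1) that] bichromatic_cycle_color[OF ext(2) bi(2) that]
    by simp_all
  show "a = a'"
    using colors[of 2] agree[OF kept[of 2]] \<open>length ?w > 2\<close> by simp
  have c1: "c (cycle_edge ?w 1) = c' (cycle_edge ?w 1)"
    using agree[OF kept[of 1]] by simp
  show "c = c'"
  proof
    fix f
    show "c f = c' f"
    proof (cases "f \<in> tail_edges xs")
      case True
      then obtain j where j: "j < length ?w" "f = cycle_edge ?w j" "j \<noteq> 0"
        unfolding tail_edges_def cycle_edges_conv_image by auto
      then have "0 < j" by simp
      show ?thesis
        unfolding j(2) colors[OF \<open>0 < j\<close> j(1)] c1 \<open>a = a'\<close> ..
    next
      case off_tail: False
      show ?thesis
      proof (cases "f \<in> F")
        case True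
        with off_tail show ?thesis by (simp add: agree)
      next
        case off_F: False
        have "c \<in> F \<rightarrow>\<^sub>E {..<N}" "c' \<in> F \<rightarrow>\<^sub>E {..<N}"
          using extensionsD[OF ext(1)] extensionsD[OF ext(2)] unfolding colorings_def by blast+
        then show ?thesis
          using PiE_arb off_F by metis
      qed
    qed
  qed
qed

definition cycle_of :: "('a set \<Rightarrow> nat) \<times> nat \<Rightarrow> 'a list" where
  "cycle_of p = (SOME xs. bichromatic_cycle (fst p) (snd p) xs)"

definition encode :: "('a set \<Rightarrow> nat) \<times> nat \<Rightarrow> 'a list \<times> ('a set \<Rightarrow> nat)" where
  "encode p = (cycle_of p, restrict (fst p) (F - tail_edges (cycle_of p)))"

lemma bad_extensionsD:
  assumes "(c, a) \<in> bad_extensions"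
  shows "(c, a) \<in> extensions" "bichromatic_cycle c a (cycle_of (c, a))"
proof -
  show "(c, a) \<in> extensions"
    using assms by (simp add: bad_extensions_def)
  show "bichromatic_cycle c a (cycle_of (c, a))"
    using someI_ex[OF bad_extension_bichromatic_cycle[OF assms]] by (simp add: cycle_of_def)
qed

lemma encode_bad_extensions:
  "encode ` bad_extensions \<subseteq> Sigma cycle_codes (\<lambda>xs. colorings (F - tail_edges xs))"
proof (rule image_subsetI, clarify)
  fix c a assume bad: "(c, a) \<in> bad_extensions"
  note ext = bad_extensionsD[OF bad]
  have "cycle_of (c, a) \<in> cycle_codes"
    using bichromatic_cycle_code[OF ext] .
  moreover have "restrict c (F - tail_edges (cycle_of (c, a))) \<in> colorings (F - tail_edges (cycle_of (c, a)))"
    using extensionsD[OF ext(1)] by (intro restrict_in_colorings) auto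
  ultimately show "encode (c, a) \<in> Sigma cycle_codes (\<lambda>xs. colorings (F - tail_edges xs))"
    by (simp add: encode_def)
qed

lemma inj_on_encode: "inj_on encode bad_extensions"
proof (rule inj_onI, clarify)
  fix c a c' a'
  assume bad: "(c, a) \<in> bad_extensions" "(c', a') \<in> bad_extensions"
    and eq: "encode (c, a) = encode (c', a')"
  let ?xs = "cycle_of (c, a)"
  have xs: "cycle_of (c', a') = ?xs"
    using eq by (simp add: encode_def)
  have "restrict c (F - tail_edges ?xs) = restrict c' (F - tail_edges ?xs)"
    using eq by (simp add: encode_def xs)
  then have "c f = c' f" if "f \<in> F - tail_edges ?xs" for f
    using that by (metis restrict_apply')
  then show "c = c' \<and> a = a'"
    using bichromatic_cycle_determines_extension[OF bad_extensionsD(1)[OF bad(1)] bad_extensionsD(1)[OF bad(2)]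
        bad_extensionsD(2)[OF bad(1)] bad_extensionsD(2)[OF bad(2), unfolded xs]]
    by blast
qed

definition walks :: "nat \<Rightarrow> 'a list set" where
  "walks m = {ys. length ys = m \<and> non_backtracking_walk E u v ys}"

lemma finite_walks: "finite (walks m)" and card_walks: "card (walks m) \<le> d ^ m"
  using card_non_backtracking_walks[OF graph degree_le uv_edge(1)] by (simp_all add: walks_def)

lemma cycle_codes_subset: "cycle_codes \<subseteq> (\<Union>i\<in>{k..card V}. walks (2 * i))"
proof
  fix xs assume "xs \<in> cycle_codes"
  then have "xs \<in> walks (2 * (length xs div 2))" "length xs div 2 \<in> {k..card V}"
    unfolding cycle_codes_def walks_def by auto
  then show "xs \<in> (\<Union>i\<in>{k..card V}. walks (2 * i))" by blast
qed

lemma finite_cycle_codes: "finite cycle_codes"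
  using cycle_codes_subset by (rule finite_subset) (simp add: finite_walks)

lemma card_bad_extensions_le_sum:
  "card bad_extensions \<le> (\<Sum>xs\<in>cycle_codes. card (colorings (F - tail_edges xs)))"
proof -
  have fin: "finite (colorings (F - tail_edges xs))" for xs
    using F_subset by (intro finite_colorings) blast
  have "card bad_extensions \<le> card (Sigma cycle_codes (\<lambda>xs. colorings (F - tail_edges xs)))"
    using inj_on_encode encode_bad_extensions
    by (rule card_inj_on_le) (simp add: finite_cycle_codes fin)
  also have "\<dots> = (\<Sum>xs\<in>cycle_codes. card (colorings (F - tail_edges xs)))"
    using finite_cycle_codes fin by simp
  finally show ?thesis .
qed

lemma card_colorings_minus_tail_le:
  assumes "xs \<in> cycle_codes"
  shows "real (card (colorings (F - tail_edges xs))) \<le> real (card (colorings F)) / growth ^ (length xs - 1)"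
proof -
  have "tail_edges xs \<subseteq> F" "length xs - 1 \<le> card (tail_edges xs)"
    using assms by (auto simp: cycle_codes_def)
  then have "growth ^ (length xs - 1) * card (colorings (F - tail_edges xs)) \<le> card (colorings F)"
    using colorings_diff_le[of "tail_edges xs"] growth_ge_1
    by (meson mult_right_mono of_nat_0_le_iff order_trans power_increasing)
  then show ?thesis
    using growth_ge_1 by (simp add: le_divide_eq mult.commute)
qed

lemma d_power_div_growth_power:
  assumes "i \<ge> 1"
  shows "real d ^ (2*i) / growth ^ (2*i - 1) = real d * \<tau> ^ (2*i - 1)"
proof -
  have "real d ^ (2*i) = real d * real d ^ (2*i - 1)"
    using assms by (simp flip: power_Suc)
  then show ?thesis
    using tau d_pos by (simp add: growth_def power_divide)
qed

lemma sum_cycle_codes_le: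
  assumes "C \<ge> 0"
  shows "(\<Sum>xs\<in>cycle_codes. C / growth ^ (length xs - 1)) \<le> C * real d * (\<tau> ^ (2*k - 1) / (1 - \<tau>\<^sup>2))"
proof -
  let ?f = "\<lambda>xs. C / growth ^ (length xs - 1)"
  have "(\<Sum>xs\<in>cycle_codes. ?f xs) \<le> (\<Sum>xs\<in>(\<Union>i\<in>{k..card V}. walks (2 * i)). ?f xs)"
    using cycle_codes_subset finite_walks assms growth_ge_1 by (intro sum_mono2) auto
  also have "\<dots> = (\<Sum>i = k..card V. \<Sum>xs\<in>walks (2 * i). ?f xs)"
    using finite_walks by (intro sum.UNION_disjoint) (auto simp: walks_def)
  also have "\<dots> = (\<Sum>i = k..card V. real (card (walks (2 * i))) * (C / growth ^ (2*i - 1)))"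
    by (intro sum.cong) (auto simp: walks_def)
  also have "\<dots> \<le> (\<Sum>i = k..card V. real d ^ (2*i) * (C / growth ^ (2*i - 1)))"
  proof (rule sum_mono)
    fix i
    have "real (card (walks (2 * i))) \<le> real d ^ (2*i)"
      using card_walks[of "2 * i"] by (simp flip: of_nat_power)
    then show "real (card (walks (2 * i))) * (C / growth ^ (2*i - 1)) \<le> real d ^ (2*i) * (C / growth ^ (2*i - 1))"
      using assms growth_ge_1 by (intro mult_right_mono) auto
  qed
  also have "\<dots> = (\<Sum>i = k..card V. C * real d * \<tau> ^ (2*i - 1))"
  proof (rule sum.cong)
    fix i assume "i \<in> {k..card V}"
    then have "i \<ge> 1" using k_def by simp
    then show "real d ^ (2*i) * (C / growth ^ (2*i - 1)) = C * real d * \<tau> ^ (2*i - 1)"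
      using d_power_div_growth_power[of i] by (metis mult.assoc mult.commute times_divide_eq_right)
  qed simp
  also have "\<dots> = C * real d * (\<Sum>i = k..card V. \<tau> ^ (2*i - 1))"
    by (simp add: sum_distrib_left)
  also have "\<dots> \<le> C * real d * (\<tau> ^ (2*k - 1) / (1 - \<tau>\<^sup>2))"
    using assms tau k_def by (intro mult_left_mono sum_odd_powers_le) auto
  finally show ?thesis .
qed

lemma card_bad_extensions_le:
  "real (card bad_extensions) \<le> real (card (colorings F)) * real d * (\<tau> ^ (2*k - 1) / (1 - \<tau>\<^sup>2))"
proof -
  have "real (card bad_extensions) \<le> (\<Sum>xs\<in>cycle_codes. real (card (colorings (F - tail_edges xs))))"
    using card_bad_extensions_le_sum by (simp flip: of_nat_sum)
  also have "\<dots> \<le> (\<Sum>xs\<in>cycle_codes. real (card (colorings F)) / growth ^ (length xs - 1))"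
    using card_colorings_minus_tail_le by (rule sum_mono)
  also have "\<dots> \<le> real (card (colorings F)) * real d * (\<tau> ^ (2*k - 1) / (1 - \<tau>\<^sup>2))"
    by (rule sum_cycle_codes_le) simp
  finally show ?thesis .
qed

lemma growth_mult_card_colorings_le: "growth * card (colorings F) \<le> card (colorings (insert e F))"
proof -
  let ?C = "real (card (colorings F))" and ?T = "\<tau> ^ (2*k - 1) / (1 - \<tau>\<^sup>2)"
  have "growth \<le> real N - 2 * real d - real d * ?T"
    using many_colors tau by (simp add: growth_def field_simps)
  then have "?C * growth \<le> ?C * (real N - 2 * real d - real d * ?T)"
    by (rule mult_left_mono) simp
  also have "\<dots> = ?C * (real N - 2 * real d) - ?C * real d * ?T"
    by (simp add: algebra_simps)
  also have "\<dots> \<le> real (card (colorings (insert e F)))"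
    using card_colorings_insert_ge card_extensions_ge card_bad_extensions_le by linarith
  finally show ?thesis by (simp add: mult.commute)
qed

end

context coloring_count
begin

lemma growth_mult_card_colorings_insert:
  "F \<subseteq> E \<Longrightarrow> e \<in> E - F \<Longrightarrow> growth * card (colorings F) \<le> card (colorings (insert e F))"
proof (induction "card F" arbitrary: F e rule: less_induct)
  case less
  have "card e = 2"
    using card_edge less.prems(2) by blast
  then obtain u v where uv: "e = {u, v}" "u \<noteq> v"
    by (auto simp: card_2_iff)
  interpret edge_extension V E N d k l \<tau> F u v
  proof
    show "S \<subseteq> F \<Longrightarrow> growth ^ card S * card (colorings (F - S)) \<le> card (colorings F)" for S
      using less by (intro card_colorings_diff) auto
  qed (use less.prems uv in auto)
  show ?case
    using growth_mult_card_colorings_le uv(1) by simp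
qed

lemma colorings_E_nonempty: "colorings E \<noteq> {}"
proof -
  have "growth ^ card E * card (colorings (E - E)) \<le> card (colorings E)"
    using growth_mult_card_colorings_insert by (intro card_colorings_diff) auto
  moreover have "growth ^ card E > 0"
    using growth_ge_1 by simp
  ultimately show ?thesis
    using colorings_empty by auto
qed

end

theorem acyclic_colorable_if_many_colors:
  assumes "graph V E" "\<forall>x\<in>V. degree E x \<le> Suc d" "d \<ge> 1" "girth_at_least V E (2*l + 1)"
    and "0 < \<tau>" "\<tau> < 1"
    and "real N \<ge> (2 + 1 / \<tau> + \<tau> ^ (2 * max 2 l - 1) / (1 - \<tau>\<^sup>2)) * real d"
  shows "acyclic_colorable V E N"
proof -
  interpret coloring_count V E N d "max 2 l" l \<tau>
    using assms by unfold_locales auto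
  obtain c where "c \<in> colorings E"
    using colorings_E_nonempty by blast
  then show ?thesis
    unfolding acyclic_colorable_def colorings_def by (auto simp: PiE_iff)
qed

lemma degree_le_max_degree: "finite V \<Longrightarrow> x \<in> V \<Longrightarrow> degree E x \<le> max_degree V E"
  unfolding max_degree_def by (simp add: Max_ge)

theorem theorem8:
  fixes l :: nat
  assumes "l \<ge> 1"
  defines "k \<equiv> max 2 l"
  shows "(\<exists>!\<tau>::real. 0 < \<tau> \<and> \<tau> < 1 \<and> polyP k \<tau> = 0) \<and>
    (\<forall>\<tau>::real. 0 < \<tau> \<and> \<tau> < 1 \<and> polyP k \<tau> = 0 \<longrightarrow>
      (\<forall>(V::'a set) E. graph V E \<and> max_degree V E \<ge> 2 \<and> girth_at_least V E (2*l+1) \<longrightarrow>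
         acyclic_colorable V E
           (nat \<lceil>(2 + (\<tau>^(2*k) - \<tau>^2 + 1) / (\<tau> - \<tau>^3)) * (real (max_degree V E) - 1)\<rceil>)))"
proof (intro conjI allI impI)
  show "\<exists>!\<tau>::real. 0 < \<tau> \<and> \<tau> < 1 \<and> polyP k \<tau> = 0"
    by (rule polyP_unique_root) (simp add: k_def)
  fix \<tau> :: real and V :: "'a set" and E
  assume \<tau>: "0 < \<tau> \<and> \<tau> < 1 \<and> polyP k \<tau> = 0"
    and G: "graph V E \<and> max_degree V E \<ge> 2 \<and> girth_at_least V E (2*l+1)"
  define d where "d = max_degree V E - 1"
  have d: "d \<ge> 1" "real (max_degree V E) - 1 = real d"
    using G by (auto simp: d_def)
  have "\<forall>x\<in>V. degree E x \<le> Suc d"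
    using G degree_le_max_degree[of V] by (auto simp: graph_def d_def)
  moreover have "(\<tau>^(2*k) - \<tau>^2 + 1) / (\<tau> - \<tau>^3) = 1 / \<tau> + \<tau> ^ (2*k - 1) / (1 - \<tau>\<^sup>2)"
    using \<tau> by (intro gamma_conv) (auto simp: k_def)
  then have "(2 + 1 / \<tau> + \<tau> ^ (2 * max 2 l - 1) / (1 - \<tau>\<^sup>2)) * real d
      \<le> real (nat \<lceil>(2 + (\<tau>^(2*k) - \<tau>^2 + 1) / (\<tau> - \<tau>^3)) * (real (max_degree V E) - 1)\<rceil>)"
    unfolding d(2) k_def by (simp add: add.assoc real_nat_ceiling_ge)
  ultimately show "acyclic_colorable V E
      (nat \<lceil>(2 + (\<tau>^(2*k) - \<tau>^2 + 1) / (\<tau> - \<tau>^3)) * (real (max_degree V E) - 1)\<rceil>)"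
    using G \<tau> d(1) by (intro acyclic_colorable_if_many_colors) auto
qed

end
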